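(* Let $H$ be a Hilbert space, $\ell\ge1$, and $\mathbf{b}=[b_1,\dots,b_\ell]^t$ with $b_j\in\mathcal{B}(H)$. Then $b_1,\dots,b_\ell$ are linearly independent if and only if there exist vectors $\xi_1,\dots,\xi_m\in H$ such that $\sum_{k=1}^mQ(\mathbf{b},\xi_k)$ is positive definite.
   Context: For $\xi\in H$, $Q(\mathbf{b},\xi)=(\langle b_i^*b_j\xi,\xi\rangle)_{i,j=1}^\ell=(\langle b_j\xi,b_i\xi\rangle)_{i,j=1}^\ell\in M_\ell(\mathbb{C})$. *)

theory Defs
  imports "HOL-Analysis.Analysis"
begin

class complex_vector = real_vector +
  fixes scaleC :: "complex \<Rightarrow> 'a \<Rightarrow> 'a" (infixr "*\<^sub>C" 75)
  assumes scaleC_add_right: "a *\<^sub>C (x + y) = a *\<^sub>C x + a *\<^sub>C y"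
    and scaleC_add_left: "(a + b) *\<^sub>C x = a *\<^sub>C x + b *\<^sub>C x"
    and scaleC_scaleC: "a *\<^sub>C (b *\<^sub>C x) = (a * b) *\<^sub>C x"
    and scaleC_one: "1 *\<^sub>C x = x"
    and scaleR_scaleC: "scaleR r x = complex_of_real r *\<^sub>C x"

class chilbert = complex_vector + banach +
  fixes cinner :: "'a \<Rightarrow> 'a \<Rightarrow> complex"
  assumes cinner_add_left: "cinner (x + y) z = cinner x z + cinner y z"
    and cinner_scaleC_left: "cinner (a *\<^sub>C x) y = a * cinner x y"
    and cinner_commute: "cinner y x = cnj (cinner x y)"
    and cinner_nonneg: "0 \<le> Re (cinner x x)"
    and cinner_eq_zero_iff: "cinner x x = 0 \<longleftrightarrow> x = 0"
    and norm_eq_sqrt_cinner: "norm x = sqrt (Re (cinner x x))"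

definition bounded_clinear :: "('a::chilbert \<Rightarrow> 'b::chilbert) \<Rightarrow> bool" where
  "bounded_clinear f \<longleftrightarrow>
     (\<forall>x y. f (x + y) = f x + f y) \<and> (\<forall>a x. f (a *\<^sub>C x) = a *\<^sub>C f x) \<and>
     (\<exists>K. \<forall>x. norm (f x) \<le> K * norm x)"

definition ops_lin_indep :: "nat \<Rightarrow> (nat \<Rightarrow> 'a::chilbert \<Rightarrow> 'a) \<Rightarrow> bool" where
  "ops_lin_indep l b \<longleftrightarrow>
     (\<forall>c :: nat \<Rightarrow> complex. (\<forall>x. (\<Sum>j<l. c j *\<^sub>C b j x) = 0) \<longrightarrow> (\<forall>j<l. c j = 0))"

text \<open>Q(b, xi) as an l x l matrix with indices 0..l-1: entry (i,j) is <b_j xi, b_i xi>.\<close>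
definition Qmat :: "(nat \<Rightarrow> 'a::chilbert \<Rightarrow> 'a) \<Rightarrow> 'a \<Rightarrow> nat \<Rightarrow> nat \<Rightarrow> complex" where
  "Qmat b xi i j = cinner (b j xi) (b i xi)"

definition pos_def_mat :: "nat \<Rightarrow> (nat \<Rightarrow> nat \<Rightarrow> complex) \<Rightarrow> bool" where
  "pos_def_mat l A \<longleftrightarrow>
     (\<forall>v :: nat \<Rightarrow> complex. (\<exists>i<l. v i \<noteq> 0) \<longrightarrow>
        (let s = (\<Sum>i<l. \<Sum>j<l. cnj (v i) * A i j * v j) in Im s = 0 \<and> Re s > 0))"

end

theory Submission
  imports Defs
begin

text \<open>The quadratic form of \<open>\<Sum>\<^sub>k Q(b,\<xi>\<^sub>k)\<close> at \<open>v\<close> is \<open>\<Sum>\<^sub>k \<parallel>\<Sum>\<^sub>j v\<^sub>j b\<^sub>j \<xi>\<^sub>k\<parallel>\<^sup>2\<close>, so the matrix is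
  positive definite exactly when no nontrivial combination \<open>\<Sum>\<^sub>j v\<^sub>j b\<^sub>j\<close> vanishes at all the
  \<open>\<xi>\<^sub>k\<close>. Linear independence of the operators says that no nontrivial combination vanishes
  everywhere, and finitely many test vectors suffice: by induction on \<open>l\<close>, if some combination
  with nonzero last coefficient vanishes at the test vectors for \<open>b\<^sub>0, \<dots>, b\<^sub>l\<^sub>-\<^sub>1\<close>, add one
  vector where it does not vanish; any combination vanishing at the enlarged family is then,
  up to a combination of \<open>b\<^sub>0, \<dots>, b\<^sub>l\<^sub>-\<^sub>1\<close>, a multiple of that one, hence zero.\<close>

lemma scaleC_zero_left [simp]: "(0::complex) *\<^sub>C (x::'a::complex_vector) = 0"
proof -
  have "(0::complex) *\<^sub>C x = 0 *\<^sub>C x + 0 *\<^sub>C x"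
    by (metis add_0 scaleC_add_left)
  then show ?thesis by simp
qed

lemma scaleC_zero_right [simp]: "(a::complex) *\<^sub>C (0::'a::complex_vector) = 0"
proof -
  have "a *\<^sub>C (0::'a) = a *\<^sub>C 0 + a *\<^sub>C 0"
    by (metis add_0 scaleC_add_right)
  then show ?thesis by simp
qed

lemma scaleC_diff_left: "((a::complex) - b) *\<^sub>C (x::'a::complex_vector) = a *\<^sub>C x - b *\<^sub>C x"
  by (metis add_diff_cancel diff_add_cancel scaleC_add_left)

lemma scaleC_sum_right:
  "(a::complex) *\<^sub>C (\<Sum>j\<in>A. f j) = (\<Sum>j\<in>A. a *\<^sub>C (f j::'a::complex_vector))"
  by (induct A rule: infinite_finite_induct) (auto simp: scaleC_add_right)

lemma scaleC_eq_0_iff: "(a::complex) *\<^sub>C (x::'a::complex_vector) = 0 \<longleftrightarrow> a = 0 \<or> x = 0"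
proof
  assume ax: "a *\<^sub>C x = 0"
  show "a = 0 \<or> x = 0"
  proof (cases "a = 0")
    case False
    then have "x = inverse a *\<^sub>C (a *\<^sub>C x)"
      by (simp add: scaleC_scaleC scaleC_one)
    then show ?thesis using ax by simp
  qed simp
qed auto

lemma cinner_zero_left [simp]: "cinner 0 (z::'a::chilbert) = 0"
proof -
  have "cinner (0::'a) z = cinner 0 z + cinner 0 z"
    by (metis add_0 cinner_add_left)
  then show ?thesis by simp
qed

lemma cinner_sum_left: "cinner (\<Sum>j\<in>A. f j) (z::'a::chilbert) = (\<Sum>j\<in>A. cinner (f j) z)"
  by (induct A rule: infinite_finite_induct) (auto simp: cinner_add_left)

lemma cinner_sum_right: "cinner (z::'a::chilbert) (\<Sum>j\<in>A. f j) = (\<Sum>j\<in>A. cinner z (f j))"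
  by (subst cinner_commute) (simp add: cinner_sum_left flip: cinner_commute)

lemma cinner_scaleC_right: "cinner (z::'a::chilbert) (a *\<^sub>C x) = cnj a * cinner z x"
  by (subst cinner_commute) (simp add: cinner_scaleC_left flip: cinner_commute)

lemma Im_cinner_self [simp]: "Im (cinner (x::'a::chilbert) x) = 0"
  using cinner_commute[of x x] by (metis cnj.simps(2) neg_equal_zero)

lemma Re_cinner_self_pos: "(x::'a::chilbert) \<noteq> 0 \<Longrightarrow> 0 < Re (cinner x x)"
  by (metis cinner_eq_zero_iff cinner_nonneg complex_eq_iff Im_cinner_self
      order_le_neq_trans zero_complex.simps)

definition ops_lin_indep_at :: "nat \<Rightarrow> (nat \<Rightarrow> 'a::chilbert \<Rightarrow> 'a) \<Rightarrow> nat \<Rightarrow> (nat \<Rightarrow> 'a) \<Rightarrow> bool"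
  where "ops_lin_indep_at l b m xi \<longleftrightarrow>
    (\<forall>v. (\<forall>k<m. (\<Sum>j<l. v j *\<^sub>C b j (xi k)) = 0) \<longrightarrow> (\<forall>j<l. v j = 0))"

lemma quadratic_form_sum_Qmat:
  "(\<Sum>i<l. \<Sum>j<l. cnj (v i) * (\<Sum>k<m. Qmat b (xi k) i j) * v j)
     = (\<Sum>k<m. cinner (\<Sum>j<l. v j *\<^sub>C b j (xi k)) (\<Sum>j<l. v j *\<^sub>C b j (xi k)))"
proof -
  have "(\<Sum>k<m. cinner (\<Sum>j<l. v j *\<^sub>C b j (xi k)) (\<Sum>j<l. v j *\<^sub>C b j (xi k)))
      = (\<Sum>k<m. \<Sum>i<l. \<Sum>j<l. cnj (v i) * (v j * cinner (b j (xi k)) (b i (xi k))))"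
    by (simp add: cinner_sum_left cinner_sum_right cinner_scaleC_left cinner_scaleC_right
        sum_distrib_left)
  also have "\<dots> = (\<Sum>i<l. \<Sum>j<l. \<Sum>k<m. cnj (v i) * (v j * cinner (b j (xi k)) (b i (xi k))))"
    by (subst sum.swap) (rule sum.cong[OF refl], rule sum.swap)
  also have "\<dots> = (\<Sum>i<l. \<Sum>j<l. cnj (v i) * (\<Sum>k<m. Qmat b (xi k) i j) * v j)"
    by (simp add: Qmat_def sum_distrib_left sum_distrib_right mult_ac)
  finally show ?thesis by simp
qed

lemma sum_cinner_self_pos_iff:
  fixes y :: "'i \<Rightarrow> 'a::chilbert"
  assumes "finite A"
  shows "0 < Re (\<Sum>k\<in>A. cinner (y k) (y k)) \<longleftrightarrow> (\<exists>k\<in>A. y k \<noteq> 0)"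
proof
  assume pos: "0 < Re (\<Sum>k\<in>A. cinner (y k) (y k))"
  show "\<exists>k\<in>A. y k \<noteq> 0"
  proof (rule ccontr)
    assume "\<not> (\<exists>k\<in>A. y k \<noteq> 0)"
    then have "(\<Sum>k\<in>A. cinner (y k) (y k)) = 0" by simp
    then show False using pos by simp
  qed
next
  assume "\<exists>k\<in>A. y k \<noteq> 0"
  then obtain k where "k \<in> A" "y k \<noteq> 0" by blast
  then have "0 < Re (cinner (y k) (y k))"
    by (simp add: Re_cinner_self_pos)
  also have "\<dots> \<le> (\<Sum>k\<in>A. Re (cinner (y k) (y k)))"
    using assms \<open>k \<in> A\<close> by (intro member_le_sum) (auto simp: cinner_nonneg)
  finally show "0 < Re (\<Sum>k\<in>A. cinner (y k) (y k))" by simp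
qed

lemma pos_def_sum_Qmat_iff:
  "pos_def_mat l (\<lambda>i j. \<Sum>k<m. Qmat b (xi k) i j) \<longleftrightarrow> ops_lin_indep_at l b m xi"
proof -
  have "pos_def_mat l (\<lambda>i j. \<Sum>k<m. Qmat b (xi k) i j) \<longleftrightarrow>
      (\<forall>v. (\<exists>j<l. v j \<noteq> 0) \<longrightarrow>
        0 < Re (\<Sum>k<m. cinner (\<Sum>j<l. v j *\<^sub>C b j (xi k)) (\<Sum>j<l. v j *\<^sub>C b j (xi k))))"
    unfolding pos_def_mat_def Let_def quadratic_form_sum_Qmat
    by (simp add: Im_sum del: Re_sum)
  also have "\<dots> \<longleftrightarrow> (\<forall>v. (\<exists>j<l. v j \<noteq> 0) \<longrightarrow> (\<exists>k<m. (\<Sum>j<l. v j *\<^sub>C b j (xi k)) \<noteq> 0))"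
    by (simp only: sum_cinner_self_pos_iff finite_lessThan lessThan_iff Bex_def)
  also have "\<dots> \<longleftrightarrow> ops_lin_indep_at l b m xi"
    unfolding ops_lin_indep_at_def by blast
  finally show ?thesis .
qed

lemma ops_lin_indep_SucD: "ops_lin_indep (Suc l) b \<Longrightarrow> ops_lin_indep l b"
  unfolding ops_lin_indep_def
proof (intro allI impI)
  fix c :: "nat \<Rightarrow> complex" and j
  assume indep: "\<forall>c. (\<forall>x. (\<Sum>j<Suc l. c j *\<^sub>C b j x) = 0) \<longrightarrow> (\<forall>j<Suc l. c j = 0)"
    and "\<forall>x. (\<Sum>j<l. c j *\<^sub>C b j x) = 0" and "j < l"
  have "\<forall>x. (\<Sum>j<Suc l. (c(l := 0)) j *\<^sub>C b j x) = 0"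
    using \<open>\<forall>x. (\<Sum>j<l. c j *\<^sub>C b j x) = 0\<close> by simp
  then have "\<forall>j<Suc l. (c(l := 0)) j = 0"
    using indep by blast
  then show "c j = 0" using \<open>j < l\<close> by (metis less_Suc_eq less_irrefl fun_upd_other)
qed

lemma ops_lin_indep_at_Suc_last_zero:
  assumes "ops_lin_indep_at l b m xi"
    and "\<forall>k<m. (\<Sum>j<Suc l. v j *\<^sub>C b j (xi k)) = 0" and "v l = 0"
  shows "\<forall>j<Suc l. v j = 0"
  using assms by (auto simp: ops_lin_indep_at_def less_Suc_eq)

lemma ops_lin_indep_at_Suc_extend:
  assumes indep: "ops_lin_indep_at l b m xi"
    and u_vanishes: "\<forall>k<m. (\<Sum>j<Suc l. u j *\<^sub>C b j (xi k)) = 0"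
    and "u l \<noteq> 0"
    and u_x: "(\<Sum>j<Suc l. u j *\<^sub>C b j x) \<noteq> 0"
  shows "ops_lin_indep_at (Suc l) b (Suc m) (xi(m := x))"
  unfolding ops_lin_indep_at_def
proof (rule allI, rule impI)
  fix v assume v_vanishes: "\<forall>k<Suc m. (\<Sum>j<Suc l. v j *\<^sub>C b j ((xi(m := x)) k)) = 0"
  define t where "t = v l / u l"
  define w where "w j = v j - t * u j" for j
  have w_comb: "(\<Sum>j<Suc l. w j *\<^sub>C b j y)
      = (\<Sum>j<Suc l. v j *\<^sub>C b j y) - t *\<^sub>C (\<Sum>j<Suc l. u j *\<^sub>C b j y)" for y
    by (simp add: w_def scaleC_diff_left sum_subtractf scaleC_sum_right scaleC_scaleC
        del: sum.lessThan_Suc)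
  have "(\<Sum>j<Suc l. v j *\<^sub>C b j (xi k)) = 0" if "k < m" for k
    using v_vanishes[rule_format, of k] that by (simp del: sum.lessThan_Suc)
  then have "\<forall>k<m. (\<Sum>j<Suc l. w j *\<^sub>C b j (xi k)) = 0"
    using u_vanishes by (simp add: w_comb del: sum.lessThan_Suc)
  moreover have "w l = 0"
    using \<open>u l \<noteq> 0\<close> by (simp add: w_def t_def)
  ultimately have w0: "\<forall>j<Suc l. w j = 0"
    using ops_lin_indep_at_Suc_last_zero[OF indep] by blast
  have "(\<Sum>j<Suc l. v j *\<^sub>C b j x) = 0"
    using v_vanishes by (metis fun_upd_same lessI)
  then have "t *\<^sub>C (\<Sum>j<Suc l. u j *\<^sub>C b j x) = 0"
    using w_comb[of x] w0 by simp
  then have "t = 0"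
    using u_x by (simp add: scaleC_eq_0_iff)
  then show "\<forall>j<Suc l. v j = 0"
    using w0 by (simp add: w_def)
qed

lemma ops_lin_indep_imp_ex_ops_lin_indep_at:
  "ops_lin_indep l b \<Longrightarrow> \<exists>m xi. ops_lin_indep_at l b m xi"
proof (induct l)
  case 0
  then show ?case by (auto simp: ops_lin_indep_at_def)
next
  case (Suc l)
  then obtain m xi where indep: "ops_lin_indep_at l b m xi"
    using ops_lin_indep_SucD by blast
  show ?case
  proof (cases "\<exists>u. (\<forall>k<m. (\<Sum>j<Suc l. u j *\<^sub>C b j (xi k)) = 0) \<and> u l \<noteq> 0")
    case True
    then obtain u where u: "\<forall>k<m. (\<Sum>j<Suc l. u j *\<^sub>C b j (xi k)) = 0" "u l \<noteq> 0"
      by blast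
    then obtain x where "(\<Sum>j<Suc l. u j *\<^sub>C b j x) \<noteq> 0"
      using Suc.prems unfolding ops_lin_indep_def by blast
    then show ?thesis
      using ops_lin_indep_at_Suc_extend[OF indep u] by blast
  next
    case False
    then have "ops_lin_indep_at (Suc l) b m xi"
      using ops_lin_indep_at_Suc_last_zero[OF indep] unfolding ops_lin_indep_at_def by blast
    then show ?thesis by blast
  qed
qed

lemma ops_lin_indep_iff_ex_ops_lin_indep_at:
  "ops_lin_indep l b \<longleftrightarrow> (\<exists>m xi. ops_lin_indep_at l b m xi)"
proof
  assume "\<exists>m xi. ops_lin_indep_at l b m xi"
  then show "ops_lin_indep l b"
    unfolding ops_lin_indep_def ops_lin_indep_at_def by blast
qed (rule ops_lin_indep_imp_ex_ops_lin_indep_at)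

theorem lemma1p11:
  fixes b :: "nat \<Rightarrow> 'h::chilbert \<Rightarrow> 'h" and l :: nat
  assumes "l \<ge> 1"
    and "\<forall>j<l. bounded_clinear (b j)"
  shows "ops_lin_indep l b \<longleftrightarrow>
    (\<exists>(m::nat) (xi :: nat \<Rightarrow> 'h). pos_def_mat l (\<lambda>i j. \<Sum>k<m. Qmat b (xi k) i j))"
  by (simp add: pos_def_sum_Qmat_iff ops_lin_indep_iff_ex_ops_lin_indep_at)

end
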